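(* Let $\mathcal G$ be an ultragraph (with no sinks) and $X$ its ultragraph shift space. Then $X$ contains a closed, shift invariant ($\sigma(Y)\subseteq Y$), uncountable and irreducible subset $Y$ if and only if $\mathcal G$ has a vertex $v$ with $\#CP_{\mathcal G}(v)\ge2$.
   Context: An ultragraph $\mathcal G=(G^0,\mathcal G^1,r,s)$ consists of countable sets $G^0$ (vertices) and $\mathcal G^1$ (edges), a map $s:\mathcal G^1\to G^0$ and a map $r:\mathcal G^1\to P(G^0)\setminus\{\emptyset\}$. Standing assumption: $\mathcal G$ has no sinks, i.e. $s^{-1}(v)\neq\emptyset$ for every $v\in G^0$. $\mathcal G^0$ is the smallest subset of $P(G^0)$ containing $\{v\}$ for all $v\in G^0$ and $r(e)$ for all $e\in\mathcal G^1$, and closed under finite unions and nonempty finite intersections. A finite path is either an element of $\mathcal G^0$ (length $0$) or a sequence of edges $e_1\dots e_k$ with $s(e_{i+1})\in r(e_i)$ (length $k$); an infinite path is a sequence $e_1e_2\dots$ of edges with $s(e_{i+1})\in r(e_i)$ for all $i$, and $\mathfrak p^\infty$ is the set of infinite paths. The set of ultrapaths $\mathfrak p$ consists of all $A\in\mathcal G^0$ (length $0$) and all pairs $(\alpha,A)$ with $\alpha=e_1\dots e_k$ a finite path, $k\ge1$, $A\in\mathcal G^0$, $A\subseteq r(e_k)$ (length $k$). A set $A\in\mathcal G^0$ is an infinite emitter if $\{e\in\mathcal G^1:s(e)\in A\}$ is infinite, and a minimal infinite emitter if moreover no proper subset of $A$ belonging to $\mathcal G^0$ is an infinite emitter. The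 ultragraph shift space is $X=\mathfrak p^\infty\cup X_{fin}$, where $X_{fin}$ consists of all $(\alpha,A)\in\mathfrak p$ with $|\alpha|\ge1$ and $A$ a minimal infinite emitter contained in $r(\alpha)$, together with all minimal infinite emitters $A\in\mathcal G^0$. An ultrapath $p$ is an initial segment of $x\in X$ when: if $p=A\in\mathcal G^0$, then either $x$ has length $\ge1$ and its first edge has source in $A$, or $x=B\in\mathcal G^0$ with $B\subseteq A$; if $p=(\alpha,A)$ with $|\alpha|\ge1$, then the first $|\alpha|$ edges of $x$ form $\alpha$ and either $x$ has length $>|\alpha|$ and its $(|\alpha|+1)$-th edge has source in $A$, or $x=(\alpha,B)$ with $B\subseteq A$. Fix an enumeration $\mathfrak p=\{p_1,p_2,\dots\}$; the metric on $X$ is $d(x,x)=0$ and, for $x\neq y$, $d(x,y)=2^{-i}$ where $i$ is the least index such that $p_i$ is an initial segment of exactly one of $x,y$ (the topology does not depend on the enumeration). The shift map $\sigma:X\to X$ is $\sigma(\gamma_1\gamma_2\dots)=\gamma_2\gamma_3\dots$, $\sigma((\gamma_1\dots\gamma_n,A))=(\gamma_2\dots\gamma_n,A)$ if $n>1$, $\sigma((\gamma_1,A))=A$, $\sigma(A)=A$. For a closed shift invariant $Y\subseteq X$ and $n\ge1$, $B_n(Y)$ is the set of finite paths $w$ of length $n$ such that $w\gamma\in Y$ for some infinite path $\gamma$, and $B(Y)=\bigcup_n B_n(Y)$; $Y$ is irreducible if for all $u,w\in B(Y)$ there is $z\in B(Y)$ with $uzw\in B(Y)$. A closed path based at the vertex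 $v$ is a finite path $e_1e_2\dots e_k$ ($k\ge1$) with $v=s(e_1)\in r(e_k)$ and $s(e_i)\neq v$ for all $1<i\le k$; $CP_{\mathcal G}(v)$ denotes the set of closed paths based at $v$. *)

theory Defs
  imports Complex_Main "HOL-Library.Countable_Set"
begin

record ('v, 'e) ultragraph =
  V :: "'v set"
  E :: "'e set"
  src :: "'e \<Rightarrow> 'v"
  rng :: "'e \<Rightarrow> 'v set"

definition is_ultragraph :: "('v, 'e) ultragraph \<Rightarrow> bool" where
  "is_ultragraph G \<longleftrightarrow> countable (V G) \<and> countable (E G)
     \<and> (\<forall>e\<in>E G. src G e \<in> V G \<and> rng G e \<noteq> {} \<and> rng G e \<subseteq> V G)"

definition no_sinks :: "('v, 'e) ultragraph \<Rightarrow> bool" where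
  "no_sinks G \<longleftrightarrow> (\<forall>v\<in>V G. \<exists>e\<in>E G. src G e = v)"

inductive_set gverts :: "('v, 'e) ultragraph \<Rightarrow> 'v set set" for G where
  sing: "v \<in> V G \<Longrightarrow> {v} \<in> gverts G"
| rng: "e \<in> E G \<Longrightarrow> rng G e \<in> gverts G"
| union: "A \<in> gverts G \<Longrightarrow> B \<in> gverts G \<Longrightarrow> A \<union> B \<in> gverts G"
| inter: "A \<in> gverts G \<Longrightarrow> B \<in> gverts G \<Longrightarrow> A \<inter> B \<noteq> {} \<Longrightarrow> A \<inter> B \<in> gverts G"

definition fpath :: "('v, 'e) ultragraph \<Rightarrow> 'e list \<Rightarrow> bool" where
  "fpath G \<alpha> \<longleftrightarrow> \<alpha> \<noteq> [] \<and> set \<alpha> \<subseteq> E G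
     \<and> (\<forall>i. Suc i < length \<alpha> \<longrightarrow> src G (\<alpha> ! Suc i) \<in> rng G (\<alpha> ! i))"

definition ipath :: "('v, 'e) ultragraph \<Rightarrow> (nat \<Rightarrow> 'e) \<Rightarrow> bool" where
  "ipath G \<gamma> \<longleftrightarrow> (\<forall>i. \<gamma> i \<in> E G \<and> src G (\<gamma> (Suc i)) \<in> rng G (\<gamma> i))"

text \<open>Ultrapaths: pairs (\<alpha>, A); \<alpha> = [] encodes the length-0 ultrapath A.\<close>
definition ultrapaths :: "('v, 'e) ultragraph \<Rightarrow> ('e list \<times> 'v set) set" where
  "ultrapaths G = {([], A) | A. A \<in> gverts G}
     \<union> {(\<alpha>, A) | \<alpha> A. fpath G \<alpha> \<and> A \<in> gverts G \<and> A \<subseteq> rng G (last \<alpha>)}"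

definition inf_emitter :: "('v, 'e) ultragraph \<Rightarrow> 'v set \<Rightarrow> bool" where
  "inf_emitter G A \<longleftrightarrow> A \<in> gverts G \<and> infinite {e \<in> E G. src G e \<in> A}"

definition min_inf_emitter :: "('v, 'e) ultragraph \<Rightarrow> 'v set \<Rightarrow> bool" where
  "min_inf_emitter G A \<longleftrightarrow> inf_emitter G A \<and> \<not> (\<exists>B. B \<subset> A \<and> inf_emitter G B)"

datatype ('v, 'e) xpt = Inf "nat \<Rightarrow> 'e" | Fin "'e list" "'v set"

definition shift_space :: "('v, 'e) ultragraph \<Rightarrow> ('v, 'e) xpt set" where
  "shift_space G = {Inf \<gamma> | \<gamma>. ipath G \<gamma>}
     \<union> {Fin \<alpha> A | \<alpha> A. fpath G \<alpha> \<and> min_inf_emitter G A \<and> A \<subseteq> rng G (last \<alpha>)}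
     \<union> {Fin [] A | A. min_inf_emitter G A}"

fun init_seg :: "('v, 'e) ultragraph \<Rightarrow> ('e list \<times> 'v set) \<Rightarrow> ('v, 'e) xpt \<Rightarrow> bool" where
  "init_seg G (\<alpha>, A) (Inf \<gamma>) \<longleftrightarrow>
     (\<forall>i<length \<alpha>. \<gamma> i = \<alpha> ! i) \<and> src G (\<gamma> (length \<alpha>)) \<in> A"
| "init_seg G (\<alpha>, A) (Fin \<beta> B) \<longleftrightarrow>
     (length \<alpha> < length \<beta> \<and> take (length \<alpha>) \<beta> = \<alpha> \<and> src G (\<beta> ! length \<alpha>) \<in> A)
     \<or> (\<beta> = \<alpha> \<and> B \<subseteq> A)"

definition up_enum :: "('v, 'e) ultragraph \<Rightarrow> nat \<Rightarrow> 'e list \<times> 'v set" where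
  "up_enum G i = from_nat_into (ultrapaths G) (i - 1)"

definition xdist :: "('v, 'e) ultragraph \<Rightarrow> ('v, 'e) xpt \<Rightarrow> ('v, 'e) xpt \<Rightarrow> real" where
  "xdist G x y = (if x = y then 0 else
     (1/2) ^ (LEAST i. 1 \<le> i \<and> init_seg G (up_enum G i) x \<noteq> init_seg G (up_enum G i) y))"

definition xclosed :: "('v, 'e) ultragraph \<Rightarrow> ('v, 'e) xpt set \<Rightarrow> bool" where
  "xclosed G Y \<longleftrightarrow> Y \<subseteq> shift_space G \<and>
     (\<forall>x\<in>shift_space G. (\<forall>\<epsilon>>0. \<exists>y\<in>Y. xdist G x y < \<epsilon>) \<longrightarrow> x \<in> Y)"

fun shift :: "('v, 'e) xpt \<Rightarrow> ('v, 'e) xpt" where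
  "shift (Inf \<gamma>) = Inf (\<lambda>i. \<gamma> (Suc i))"
| "shift (Fin \<alpha> A) = Fin (tl \<alpha>) A"

definition concat_inf :: "'e list \<Rightarrow> (nat \<Rightarrow> 'e) \<Rightarrow> (nat \<Rightarrow> 'e)" where
  "concat_inf w \<gamma> = (\<lambda>i. if i < length w then w ! i else \<gamma> (i - length w))"

definition blocks_n :: "('v, 'e) ultragraph \<Rightarrow> ('v, 'e) xpt set \<Rightarrow> nat \<Rightarrow> 'e list set" where
  "blocks_n G Y n = {w. fpath G w \<and> length w = n \<and>
                        (\<exists>\<gamma>. ipath G \<gamma> \<and> Inf (concat_inf w \<gamma>) \<in> Y)}"

definition blocks :: "('v, 'e) ultragraph \<Rightarrow> ('v, 'e) xpt set \<Rightarrow> 'e list set" where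
  "blocks G Y = (\<Union>n\<in>{1..}. blocks_n G Y n)"

definition irreducible_sub :: "('v, 'e) ultragraph \<Rightarrow> ('v, 'e) xpt set \<Rightarrow> bool" where
  "irreducible_sub G Y \<longleftrightarrow>
     (\<forall>u\<in>blocks G Y. \<forall>w\<in>blocks G Y. \<exists>z\<in>blocks G Y. u @ z @ w \<in> blocks G Y)"

definition closed_paths :: "('v, 'e) ultragraph \<Rightarrow> 'v \<Rightarrow> 'e list set" where
  "closed_paths G v = {c. fpath G c \<and> src G (hd c) = v \<and> v \<in> rng G (last c)
                         \<and> (\<forall>i. 0 < i \<and> i < length c \<longrightarrow> src G (c ! i) \<noteq> v)}"

end

theory Submission
  imports Defs
begin

text \<open>If a vertex \<open>v\<close> has two distinct closed paths \<open>c\<^sub>1, c\<^sub>2\<close>, take the infinite paths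
  all of whose prefixes are factors of words in \<open>{c\<^sub>1, c\<^sub>2}\<^sup>*\<close>. This set is closed (it uses
  only the finitely many edges of \<open>c\<^sub>1, c\<^sub>2\<close>, so no finite point of the shift space is a
  limit of it), shift invariant and irreducible, and it is uncountable: \<open>c\<^sub>1c\<^sub>2\<close> and
  \<open>c\<^sub>2c\<^sub>1\<close> are distinct words of equal length, so every subset of \<open>\<nat>\<close> selects its own
  infinite concatenation of these two blocks.

  Conversely, irreducibility lets every prefix of an infinite path \<open>\<gamma>\<close> in \<open>Y\<close> be closed up to
  a loop at the source of \<open>\<gamma>\<close>. Cutting a loop at its returns to the base vertex shows that,
  if that vertex has a unique closed path \<open>c\<close>, every such loop is a prefix of \<open>ccc\<dots>\<close>. So \<open>\<gamma>\<close> is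
  periodic, and \<open>Y\<close> consists of countably many periodic paths and finite points.\<close>

section \<open>Paths and loops\<close>

lemma successively_iff_nth:
  "successively P xs \<longleftrightarrow> (\<forall>i. Suc i < length xs \<longrightarrow> P (xs ! i) (xs ! Suc i))"
proof (induction P xs rule: successively.induct)
  case (3 P x y xs)
  then show ?case by (auto simp: All_less_Suc2 less_Suc_eq_0_disj)
qed auto

lemma fpath_iff_successively:
  "fpath G \<alpha> \<longleftrightarrow> \<alpha> \<noteq> [] \<and> set \<alpha> \<subseteq> E G \<and> successively (\<lambda>e f. src G f \<in> rng G e) \<alpha>"
  by (auto simp: fpath_def successively_iff_nth)

lemma fpath_append_iff:
  "a \<noteq> [] \<Longrightarrow> b \<noteq> [] \<Longrightarrow>
    fpath G (a @ b) \<longleftrightarrow> fpath G a \<and> fpath G b \<and> src G (hd b) \<in> rng G (last a)"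
  by (auto simp: fpath_iff_successively successively_append_iff)

lemma fpath_infix: "fpath G (p @ x @ s) \<Longrightarrow> x \<noteq> [] \<Longrightarrow> fpath G x"
  by (auto simp: fpath_iff_successively successively_append_iff)

lemma ipath_iff_fpath_prefixes: "ipath G \<gamma> \<longleftrightarrow> (\<forall>n>0. fpath G (map \<gamma> [0..<n]))"
proof
  assume prefixes: "\<forall>n>0. fpath G (map \<gamma> [0..<n])"
  show "ipath G \<gamma>"
    unfolding ipath_def
  proof
    fix i
    have "fpath G (map \<gamma> [0..<Suc (Suc i)])" using prefixes by blast
    then have "set (map \<gamma> [0..<Suc (Suc i)]) \<subseteq> E G"
      and "src G (map \<gamma> [0..<Suc (Suc i)] ! Suc i) \<in> rng G (map \<gamma> [0..<Suc (Suc i)] ! i)"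
      unfolding fpath_def by auto
    then show "\<gamma> i \<in> E G \<and> src G (\<gamma> (Suc i)) \<in> rng G (\<gamma> i)"
      by (auto simp del: upt_Suc)
  qed
qed (auto simp: ipath_def fpath_def)

definition loop_at :: "('v, 'e) ultragraph \<Rightarrow> 'v \<Rightarrow> 'e list \<Rightarrow> bool" where
  "loop_at G v l \<longleftrightarrow> fpath G l \<and> src G (hd l) = v \<and> v \<in> rng G (last l)"

lemma closed_path_loop_at: "c \<in> closed_paths G v \<Longrightarrow> loop_at G v c"
  by (simp add: closed_paths_def loop_at_def)

lemma loop_at_nonempty: "loop_at G v l \<Longrightarrow> l \<noteq> []"
  by (simp add: loop_at_def fpath_def)

lemma loop_at_append: "loop_at G v a \<Longrightarrow> loop_at G v b \<Longrightarrow> loop_at G v (a @ b)"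
  using loop_at_nonempty[of G v a] loop_at_nonempty[of G v b]
  by (auto simp: loop_at_def fpath_append_iff)

lemma loop_at_concat: "\<forall>c\<in>set cs. loop_at G v c \<Longrightarrow> cs \<noteq> [] \<Longrightarrow> loop_at G v (concat cs)"
proof (induction cs)
  case (Cons c cs)
  then show ?case by (cases "cs = []") (auto intro: loop_at_append)
qed simp

lemma loop_at_first_return:
  assumes "loop_at G v l"
  obtains c r where "l = c @ r" "c \<in> closed_paths G v" "r = [] \<or> loop_at G v r"
proof -
  have l: "fpath G l" "src G (hd l) = v" "v \<in> rng G (last l)"
    using assms by (auto simp: loop_at_def)
  then have "l \<noteq> []" by (simp add: fpath_def)
  define returns where
    "returns j \<longleftrightarrow> 0 < j \<and> (j = length l \<or> j < length l \<and> src G (l ! j) = v)" for j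
  define j where "j = (LEAST j. returns j)"
  have "returns (length l)" using \<open>l \<noteq> []\<close> by (simp add: returns_def)
  then have j: "returns j" unfolding j_def by (rule LeastI)
  have interior: "src G (l ! i) \<noteq> v" if "0 < i" "i < j" for i
  proof -
    have "i < length l" using j that by (auto simp: returns_def)
    then show ?thesis using not_less_Least[of i returns] that by (auto simp: returns_def j_def)
  qed
  let ?c = "take j l" and ?r = "drop j l"
  have "?c \<noteq> []" using j \<open>l \<noteq> []\<close> by (simp add: returns_def)
  have r_start: "src G (hd ?r) = v \<and> v \<in> rng G (last ?c)" if "?r \<noteq> []"
  proof -
    have "fpath G (?c @ ?r)" using l by simp
    then have "src G (hd ?r) \<in> rng G (last ?c)"
      using fpath_append_iff \<open>?c \<noteq> []\<close> that by blast
    moreover have "src G (hd ?r) = v" using j that by (auto simp: returns_def hd_drop_conv_nth)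
    ultimately show ?thesis by simp
  qed
  have "?c \<in> closed_paths G v"
    unfolding closed_paths_def
  proof (intro CollectI conjI allI impI)
    show "fpath G ?c" using fpath_infix[of G "[]" ?c ?r] l \<open>?c \<noteq> []\<close> by simp
    show "src G (hd ?c) = v" using l j by (simp add: returns_def)
    show "v \<in> rng G (last ?c)"
      using r_start l by (cases "?r = []") auto
  next
    fix i assume "0 < i \<and> i < length ?c"
    then show "src G (?c ! i) \<noteq> v" using interior by simp
  qed
  moreover have "?r = [] \<or> loop_at G v ?r"
    using fpath_infix[of G ?c ?r "[]"] l r_start by (auto simp: loop_at_def)
  ultimately show thesis using that[of ?c ?r] by simp
qed

lemma loop_at_periodic:
  assumes "closed_paths G v \<subseteq> {c}" "loop_at G v l" "i < length l"
  shows "l ! i = c ! (i mod length c)"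
  using assms(2,3)
proof (induction "length l" arbitrary: l i rule: less_induct)
  case less
  obtain r where l: "l = c @ r" and "c \<in> closed_paths G v" and r: "r = [] \<or> loop_at G v r"
    using loop_at_first_return[OF less.prems(1)] assms(1) by blast
  then have "c \<noteq> []" by (simp add: closed_paths_def fpath_def)
  show ?case
  proof (cases "i < length c")
    case True
    then show ?thesis by (simp add: l nth_append)
  next
    case False
    then have "r \<noteq> []" "i - length c < length r" using less.prems(2) l by auto
    then have "r ! (i - length c) = c ! ((i - length c) mod length c)"
      using less.hyps[of r] r l \<open>c \<noteq> []\<close> by auto
    then show ?thesis using False by (simp add: l nth_append le_mod_geq)
  qed
qed

lemma closed_paths_commute_imp_eq:
  assumes "c1 \<in> closed_paths G v" "c2 \<in> closed_paths G v" "c1 @ c2 = c2 @ c1"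
  shows "c1 = c2"
proof -
  have not_shorter: "\<not> length a < length b"
    if "a \<in> closed_paths G v" "b \<in> closed_paths G v" "a @ b = b @ a" for a b
  proof
    assume "length a < length b"
    then have "b ! length a = (a @ b) ! length a" using that(3) by (simp add: nth_append)
    also have "\<dots> = hd b" using that(2) by (auto simp: nth_append closed_paths_def fpath_def hd_conv_nth)
    finally have "src G (b ! length a) = v" using that(2) by (simp add: closed_paths_def)
    moreover have "0 < length a" using that(1) by (simp add: closed_paths_def fpath_def)
    ultimately show False using that(2) \<open>length a < length b\<close> by (auto simp: closed_paths_def)
  qed
  have "length c1 = length c2" using not_shorter assms by (metis linorder_neqE_nat)
  then show ?thesis using assms(3) by (metis append_eq_append_conv)
qed

section \<open>Countability of ultrapaths and the metric\<close>

fun gvert_stage :: "('v, 'e) ultragraph \<Rightarrow> nat \<Rightarrow> 'v set set" where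
  "gvert_stage G 0 = (\<lambda>v. {v}) ` V G \<union> rng G ` E G"
| "gvert_stage G (Suc n) = gvert_stage G n \<union> (\<lambda>(A, B). A \<union> B) ` (gvert_stage G n \<times> gvert_stage G n)
      \<union> (\<lambda>(A, B). A \<inter> B) ` (gvert_stage G n \<times> gvert_stage G n)"

lemma countable_gvert_stage: "is_ultragraph G \<Longrightarrow> countable (gvert_stage G n)"
  by (induction n) (auto simp: is_ultragraph_def)

lemma gvert_stage_mono: "n \<le> m \<Longrightarrow> gvert_stage G n \<subseteq> gvert_stage G m"
  by (rule lift_Suc_mono_le[of "gvert_stage G"]) auto

lemma gvert_stage_Suc_max:
  assumes "A \<in> gvert_stage G n" "B \<in> gvert_stage G m"
  shows "A \<union> B \<in> gvert_stage G (Suc (max n m))" "A \<inter> B \<in> gvert_stage G (Suc (max n m))"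
proof -
  have "A \<in> gvert_stage G (max n m)" "B \<in> gvert_stage G (max n m)"
    using assms gvert_stage_mono[of n "max n m" G] gvert_stage_mono[of m "max n m" G] by auto
  then show "A \<union> B \<in> gvert_stage G (Suc (max n m))" "A \<inter> B \<in> gvert_stage G (Suc (max n m))"
    by auto
qed

lemma gverts_subset_stages: "gverts G \<subseteq> (\<Union>n. gvert_stage G n)"
proof
  fix A assume "A \<in> gverts G"
  then show "A \<in> (\<Union>n. gvert_stage G n)"
  proof (induction rule: gverts.induct)
    case (sing v)
    then have "{v} \<in> gvert_stage G 0" by simp
    then show ?case by blast
  next
    case (rng e)
    then have "rng G e \<in> gvert_stage G 0" by simp
    then show ?case by blast
  next
    case (union A B)
    then obtain n m where "A \<in> gvert_stage G n" "B \<in> gvert_stage G m" by blast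
    then have "A \<union> B \<in> gvert_stage G (Suc (max n m))" by (rule gvert_stage_Suc_max)
    then show ?case by blast
  next
    case (inter A B)
    then obtain n m where "A \<in> gvert_stage G n" "B \<in> gvert_stage G m" by blast
    then have "A \<inter> B \<in> gvert_stage G (Suc (max n m))" by (rule gvert_stage_Suc_max)
    then show ?case by blast
  qed
qed

lemma countable_gverts: "is_ultragraph G \<Longrightarrow> countable (gverts G)"
  by (rule countable_subset[OF gverts_subset_stages]) (simp add: countable_gvert_stage)

lemma ultrapaths_subset: "ultrapaths G \<subseteq> lists (E G) \<times> gverts G"
  by (auto simp: ultrapaths_def fpath_def)

lemma countable_ultrapaths: "is_ultragraph G \<Longrightarrow> countable (ultrapaths G)"
  by (rule countable_subset[OF ultrapaths_subset])
    (simp add: countable_gverts is_ultragraph_def)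

lemma shift_space_Fin_ultrapath: "Fin \<alpha> A \<in> shift_space G \<Longrightarrow> (\<alpha>, A) \<in> ultrapaths G"
  by (auto simp: shift_space_def ultrapaths_def min_inf_emitter_def inf_emitter_def)

lemma xdist_ge_if_init_seg_differs:
  assumes "1 \<le> i" "init_seg G (up_enum G i) x \<noteq> init_seg G (up_enum G i) y"
  shows "(1/2) ^ i \<le> xdist G x y"
proof -
  let ?P = "\<lambda>i. 1 \<le> i \<and> init_seg G (up_enum G i) x \<noteq> init_seg G (up_enum G i) y"
  have "x \<noteq> y" using assms(2) by auto
  then have "xdist G x y = (1/2) ^ (LEAST i. ?P i)" by (simp add: xdist_def)
  moreover have "(LEAST i. ?P i) \<le> i" using assms by (blast intro: Least_le)
  ultimately show ?thesis by (simp add: power_decreasing)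
qed

lemma xdist_small_imp_init_seg_eq:
  assumes "countable (ultrapaths G)" "finite F" "F \<subseteq> ultrapaths G"
  obtains \<epsilon> :: real where "\<epsilon> > 0"
    "\<And>x y p. xdist G x y < \<epsilon> \<Longrightarrow> p \<in> F \<Longrightarrow> init_seg G p x = init_seg G p y"
proof -
  have "\<forall>p\<in>F. \<exists>n. up_enum G (Suc n) = p"
    using from_nat_into_surj[OF assms(1)] assms(3) by (auto simp: up_enum_def)
  from bchoice[OF this] obtain idx where idx: "\<forall>p\<in>F. up_enum G (Suc (idx p)) = p" ..
  define N where "N = Suc (Max (insert 0 (idx ` F)))"
  show thesis
  proof (rule that)
    fix x y p assume close: "xdist G x y < (1/2) ^ N" and "p \<in> F"
    show "init_seg G p x = init_seg G p y"
    proof (rule ccontr)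
      assume "init_seg G p x \<noteq> init_seg G p y"
      then have "(1/2) ^ Suc (idx p) \<le> xdist G x y"
        using xdist_ge_if_init_seg_differs[of "Suc (idx p)" G x y] idx \<open>p \<in> F\<close> by simp
      moreover have "Suc (idx p) \<le> N" using assms(2) \<open>p \<in> F\<close> by (simp add: N_def)
      then have "(1/2 :: real) ^ N \<le> (1/2) ^ Suc (idx p)" by (intro power_decreasing) auto
      ultimately show False using close by linarith
    qed
  qed simp
qed

lemma adherent_agrees_on_finite:
  assumes "countable (ultrapaths G)" "\<forall>\<epsilon>>0. \<exists>y\<in>Y. xdist G x y < \<epsilon>"
    "finite F" "F \<subseteq> ultrapaths G"
  shows "\<exists>y\<in>Y. \<forall>p\<in>F. init_seg G p x = init_seg G p y"
proof -
  obtain \<epsilon> :: real where "\<epsilon> > 0"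
    and agree: "\<And>x y p. xdist G x y < \<epsilon> \<Longrightarrow> p \<in> F \<Longrightarrow> init_seg G p x = init_seg G p y"
    using xdist_small_imp_init_seg_eq[OF assms(1,3,4)] by blast
  then obtain y where "y \<in> Y" "xdist G x y < \<epsilon>" using assms(2) by blast
  then show ?thesis using agree by blast
qed

lemma adherent_ipath_prefix:
  assumes "countable (ultrapaths G)" "\<forall>\<epsilon>>0. \<exists>y\<in>Y. xdist G (Inf \<gamma>) y < \<epsilon>"
    "ipath G \<gamma>" "Y \<subseteq> range Inf"
  shows "\<exists>\<delta>. Inf \<delta> \<in> Y \<and> map \<delta> [0..<n] = map \<gamma> [0..<n]"
proof -
  let ?p = "(map \<gamma> [0..<Suc n], rng G (\<gamma> n))"
  have "fpath G (map \<gamma> [0..<Suc n])" using assms(3) ipath_iff_fpath_prefixes by blast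
  moreover have "\<gamma> n \<in> E G" using assms(3) by (simp add: ipath_def)
  ultimately have "?p \<in> ultrapaths G" by (simp add: ultrapaths_def gverts.rng)
  then have "\<exists>y\<in>Y. \<forall>p\<in>{?p}. init_seg G p (Inf \<gamma>) = init_seg G p y"
    by (intro adherent_agrees_on_finite[OF assms(1,2)]) auto
  then obtain y where "y \<in> Y" and agree: "init_seg G ?p (Inf \<gamma>) = init_seg G ?p y" by blast
  obtain \<delta> where y: "y = Inf \<delta>" using \<open>y \<in> Y\<close> assms(4) by blast
  have "init_seg G ?p (Inf \<gamma>)" using assms(3) by (simp add: ipath_def del: upt_Suc)
  then have "init_seg G ?p (Inf \<delta>)" using agree y by blast
  then have "\<forall>i<Suc n. \<delta> i = \<gamma> i" by (simp del: upt_Suc)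
  then have "map \<delta> [0..<n] = map \<gamma> [0..<n]" by simp
  then show ?thesis using \<open>y \<in> Y\<close> y by blast
qed

lemma Fin_not_adherent:
  assumes "countable (ultrapaths G)" "(\<alpha>, A) \<in> ultrapaths G" "finite D"
    and Y: "\<And>y. y \<in> Y \<Longrightarrow> \<exists>\<delta>. y = Inf \<delta> \<and> ipath G \<delta> \<and> range \<delta> \<subseteq> D"
  shows "\<not> (\<forall>\<epsilon>>0. \<exists>y\<in>Y. xdist G (Fin \<alpha> A) y < \<epsilon>)"
proof
  assume adherent: "\<forall>\<epsilon>>0. \<exists>y\<in>Y. xdist G (Fin \<alpha> A) y < \<epsilon>"
  let ?ext = "\<lambda>e. (\<alpha> @ [e], rng G e)"
  define F where "F = insert (\<alpha>, A) (?ext ` D \<inter> ultrapaths G)"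
  have "finite F" "F \<subseteq> ultrapaths G" using assms(2,3) by (auto simp: F_def)
  with adherent_agrees_on_finite[OF assms(1) adherent] obtain y
    where "y \<in> Y" and agree: "\<forall>p\<in>F. init_seg G p (Fin \<alpha> A) = init_seg G p y" by blast
  then obtain \<delta> where y: "y = Inf \<delta>" and \<delta>: "ipath G \<delta>" "range \<delta> \<subseteq> D" using Y by blast
  have "init_seg G (\<alpha>, A) (Inf \<delta>)" using agree y by (simp add: F_def)
  then have prefix: "\<forall>i<length \<alpha>. \<delta> i = \<alpha> ! i" by simp
  let ?e = "\<delta> (length \<alpha>)"
  have "\<alpha> @ [?e] = map \<delta> [0..<Suc (length \<alpha>)]"
    using prefix by (intro nth_equalityI) (auto simp: nth_append less_Suc_eq simp del: upt_Suc)
  then have "fpath G (\<alpha> @ [?e])" using \<delta>(1) by (simp add: ipath_iff_fpath_prefixes del: upt_Suc)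
  moreover have "?e \<in> E G" using \<delta>(1) by (simp add: ipath_def)
  ultimately have "?ext ?e \<in> ultrapaths G" by (simp add: ultrapaths_def gverts.rng)
  then have "?ext ?e \<in> F" using \<delta>(2) by (auto simp: F_def)
  then have "init_seg G (?ext ?e) (Fin \<alpha> A) = init_seg G (?ext ?e) (Inf \<delta>)"
    using agree y by blast
  moreover have "init_seg G (?ext ?e) (Inf \<delta>)"
    using prefix \<delta>(1) by (auto simp: ipath_def nth_append less_Suc_eq)
  moreover have "\<not> init_seg G (?ext ?e) (Fin \<alpha> A)" by simp
  ultimately show False by blast
qed

section \<open>Irreducible sets in the absence of branching loops\<close>

lemma prefix_mem_blocks:
  assumes "ipath G \<gamma>" "Inf \<gamma> \<in> Y" "0 < n"
  shows "map \<gamma> [0..<n] \<in> blocks G Y"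
proof -
  have "concat_inf (map \<gamma> [0..<n]) (\<lambda>i. \<gamma> (i + n)) = \<gamma>"
    by (auto simp: concat_inf_def)
  moreover have "ipath G (\<lambda>i. \<gamma> (i + n))" using assms(1) by (simp add: ipath_def)
  moreover have "fpath G (map \<gamma> [0..<n])" using assms(1,3) ipath_iff_fpath_prefixes by blast
  ultimately have "map \<gamma> [0..<n] \<in> blocks_n G Y n"
    using assms(2) unfolding blocks_n_def by (auto intro!: exI[of _ "\<lambda>i. \<gamma> (i + n)"])
  then show ?thesis using assms(3) by (auto simp: blocks_def)
qed

lemma irreducible_prefix_loop:
  assumes "irreducible_sub G Y" "ipath G \<gamma>" "Inf \<gamma> \<in> Y" "0 < n"
  obtains l where "loop_at G (src G (\<gamma> 0)) l" "take n l = map \<gamma> [0..<n]"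
proof -
  let ?u = "map \<gamma> [0..<n]"
  have "?u \<in> blocks G Y" using prefix_mem_blocks assms(2-4) .
  then obtain z where "z \<in> blocks G Y" "?u @ z @ ?u \<in> blocks G Y"
    using assms(1) unfolding irreducible_sub_def by blast
  then have "z \<noteq> []" "fpath G ((?u @ z) @ ?u)"
    by (auto simp: blocks_def blocks_n_def fpath_def)
  then have "fpath G (?u @ z)" "src G (hd ?u) \<in> rng G (last (?u @ z))"
    using fpath_append_iff[of "?u @ z" ?u G] assms(4) by auto
  moreover have "hd ?u = \<gamma> 0" using assms(4) by (simp add: hd_map)
  ultimately have "loop_at G (src G (\<gamma> 0)) (?u @ z)" using assms(4) by (simp add: loop_at_def)
  then show thesis using that by simp
qed

lemma irreducible_ipath_periodic:
  assumes "irreducible_sub G Y" "ipath G \<gamma>" "Inf \<gamma> \<in> Y"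
    and unique: "\<forall>c1\<in>closed_paths G (src G (\<gamma> 0)). \<forall>c2\<in>closed_paths G (src G (\<gamma> 0)). c1 = c2"
  shows "\<exists>c\<in>closed_paths G (src G (\<gamma> 0)). \<gamma> = (\<lambda>i. c ! (i mod length c))"
proof -
  let ?v = "src G (\<gamma> 0)"
  obtain l where "loop_at G ?v l" using irreducible_prefix_loop[OF assms(1-3), of 1] by auto
  then obtain c r where "l = c @ r" "c \<in> closed_paths G ?v" "r = [] \<or> loop_at G ?v r"
    by (rule loop_at_first_return)
  then have c: "c \<in> closed_paths G ?v" by blast
  then have "closed_paths G ?v \<subseteq> {c}" using unique by blast
  have "\<gamma> i = c ! (i mod length c)" for i
  proof -
    obtain l where l: "loop_at G ?v l" and prefix: "take (Suc i) l = map \<gamma> [0..<Suc i]"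
      using irreducible_prefix_loop[OF assms(1-3), of "Suc i"] by auto
    have "i < length l" using arg_cong[OF prefix, of length] by auto
    moreover have "take (Suc i) l ! i = map \<gamma> [0..<Suc i] ! i" using prefix by simp
    then have "l ! i = \<gamma> i" by (simp del: upt_Suc)
    ultimately show ?thesis using loop_at_periodic[OF \<open>closed_paths G ?v \<subseteq> {c}\<close> l] by simp
  qed
  then show ?thesis using c by auto
qed

lemma countable_irreducible_if_unique_closed_paths:
  assumes "is_ultragraph G" "Y \<subseteq> shift_space G" "irreducible_sub G Y"
    and unique: "\<forall>v\<in>V G. \<forall>c1\<in>closed_paths G v. \<forall>c2\<in>closed_paths G v. c1 = c2"
  shows "countable Y"
proof (rule countable_subset)
  show "Y \<subseteq> (\<lambda>c. Inf (\<lambda>i. c ! (i mod length c))) ` lists (E G) \<union> case_prod Fin ` ultrapaths G"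
  proof
    fix x assume "x \<in> Y"
    show "x \<in> (\<lambda>c. Inf (\<lambda>i. c ! (i mod length c))) ` lists (E G) \<union> case_prod Fin ` ultrapaths G"
    proof (cases x)
      case (Inf \<gamma>)
      then have "ipath G \<gamma>" using \<open>x \<in> Y\<close> assms(2) by (auto simp: shift_space_def)
      then have "src G (\<gamma> 0) \<in> V G" using assms(1) by (auto simp: is_ultragraph_def ipath_def)
      then have "\<exists>c\<in>closed_paths G (src G (\<gamma> 0)). \<gamma> = (\<lambda>i. c ! (i mod length c))"
        using irreducible_ipath_periodic[OF assms(3) \<open>ipath G \<gamma>\<close>] Inf \<open>x \<in> Y\<close> unique by simp
      then obtain c where "c \<in> closed_paths G (src G (\<gamma> 0))" "\<gamma> = (\<lambda>i. c ! (i mod length c))" ..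
      moreover from this have "c \<in> lists (E G)" by (auto simp: closed_paths_def fpath_def)
      ultimately show ?thesis using Inf by blast
    next
      case (Fin \<alpha> A)
      then have "(\<alpha>, A) \<in> ultrapaths G" using \<open>x \<in> Y\<close> assms(2) shift_space_Fin_ultrapath by blast
      then show ?thesis using Fin by (auto intro: image_eqI[where x = "(\<alpha>, A)"])
    qed
  qed
  show "countable ((\<lambda>c. Inf (\<lambda>i. c ! (i mod length c))) ` lists (E G) \<union> case_prod Fin ` ultrapaths G)"
    using assms(1) countable_ultrapaths[OF assms(1)] by (simp add: is_ultragraph_def)
qed

section \<open>The subshift generated by a set of loops\<close>

definition factors :: "'a list set \<Rightarrow> 'a list set" where
  "factors L = {x. \<exists>p s. p @ x @ s \<in> L}"

definition concat_subshift :: "'e list set \<Rightarrow> ('v, 'e) xpt set" where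
  "concat_subshift C = {Inf \<gamma> | \<gamma>. \<forall>n. map \<gamma> [0..<n] \<in> factors (concat ` lists C)}"

lemma factors_infix: "p @ x @ s \<in> factors L \<Longrightarrow> x \<in> factors L"
proof -
  assume "p @ x @ s \<in> factors L"
  then obtain p' s' where "p' @ (p @ x @ s) @ s' \<in> L" by (auto simp: factors_def)
  then have "(p' @ p) @ x @ (s @ s') \<in> L" by simp
  then show "x \<in> factors L" unfolding factors_def by blast
qed

lemma mem_concat_lists: "c \<in> C \<Longrightarrow> c \<in> concat ` lists C"
  by (rule image_eqI[of _ _ "[c]"]) auto

lemma concat_mem_concat_lists: "set ws \<subseteq> concat ` lists C \<Longrightarrow> concat ws \<in> concat ` lists C"
proof (induction ws)
  case Nil
  show ?case using lists.Nil concat.simps(1) by (metis image_eqI)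
next
  case (Cons w ws)
  then obtain cs ds where "w = concat cs" "cs \<in> lists C" "concat ws = concat ds" "ds \<in> lists C"
    by auto
  then have "concat (w # ws) = concat (cs @ ds)" "cs @ ds \<in> lists C" by auto
  then show ?case by blast
qed

lemma map_upt_concat_inf: "map (concat_inf w \<gamma>) [0..<n] = take n (w @ map \<gamma> [0..<n])"
  by (rule nth_equalityI) (auto simp: concat_inf_def nth_append)

lemma nth_concat_equal_length:
  assumes "\<forall>j<m. length (f j) = K" "i < m * K"
  shows "concat (map f [0..<m]) ! i = f (i div K) ! (i mod K)"
  using assms
proof (induction m arbitrary: i)
  case (Suc m)
  have len: "length (concat (map f [0..<m])) = m * K"
    using Suc.prems(1) by (induction m) auto
  show ?case
  proof (cases "i < m * K")
    case True
    then show ?thesis using Suc by (simp add: nth_append len)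
  next
    case False
    define r where "r = i - m * K"
    have i: "i = m * K + r" "r < K" using False Suc.prems(2) by (auto simp: r_def)
    then have "i div K = m" "i mod K = r" by auto
    then show ?thesis using Suc.prems(1) i by (simp add: nth_append len)
  qed
qed simp

text \<open>\<open>\<lambda>i. f (i div K) ! (i mod K)\<close> is the infinite concatenation \<open>f 0 @ f 1 @ f 2 @ \<dots>\<close>
  of blocks of length \<open>K\<close>.\<close>

lemma map_upt_block_word:
  assumes "\<forall>j. length (f j) = K" "0 < K"
  shows "map (\<lambda>i. f (i div K) ! (i mod K)) [0..<n] = take n (concat (map f [0..<n]))"
proof -
  have len: "length (concat (map f [0..<n])) = n * K"
    using assms(1) by (induction n) auto
  have "n \<le> n * K" using assms(2) by simp
  show ?thesis
  proof (rule nth_equalityI)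
    show "length (map (\<lambda>i. f (i div K) ! (i mod K)) [0..<n]) = length (take n (concat (map f [0..<n])))"
      using len \<open>n \<le> n * K\<close> by simp
  next
    fix i assume "i < length (map (\<lambda>i. f (i div K) ! (i mod K)) [0..<n])"
    then have "i < n" by simp
    then have "i < n * K" using \<open>n \<le> n * K\<close> by linarith
    then show "map (\<lambda>i. f (i div K) ! (i mod K)) [0..<n] ! i = take n (concat (map f [0..<n])) ! i"
      using nth_concat_equal_length[of n f K i] assms(1) \<open>i < n\<close> \<open>i < n * K\<close> by simp
  qed
qed

lemma concat_inf_block_word_mem_concat_subshift:
  assumes "p @ w \<in> concat ` lists C" "\<forall>j. f j \<in> concat ` lists C" "\<forall>j. length (f j) = K" "0 < K"
  shows "Inf (concat_inf w (\<lambda>i. f (i div K) ! (i mod K))) \<in> concat_subshift C"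
proof -
  have "map (concat_inf w (\<lambda>i. f (i div K) ! (i mod K))) [0..<n] \<in> factors (concat ` lists C)" for n
  proof -
    let ?X = "concat (map f [0..<n])"
    have "?X \<in> concat ` lists C" using assms(2) by (intro concat_mem_concat_lists) auto
    then have "p @ w @ ?X \<in> concat ` lists C"
      using assms(1) concat_mem_concat_lists[of "[p @ w, ?X]" C] by simp
    then have "p @ take n (w @ ?X) @ drop n (w @ ?X) \<in> concat ` lists C"
      by (simp only: append_take_drop_id)
    moreover have "map (concat_inf w (\<lambda>i. f (i div K) ! (i mod K))) [0..<n] = take n (w @ ?X)"
      using assms(3,4) by (simp add: map_upt_concat_inf map_upt_block_word)
    ultimately show ?thesis unfolding factors_def by (metis (mono_tags, lifting) mem_Collect_eq)
  qed
  then show ?thesis by (simp add: concat_subshift_def)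
qed

lemma concat_subshift_shift: "y \<in> concat_subshift C \<Longrightarrow> shift y \<in> concat_subshift C"
proof -
  assume "y \<in> concat_subshift C"
  then obtain \<gamma> where y: "y = Inf \<gamma>"
    and prefixes: "\<forall>n. map \<gamma> [0..<n] \<in> factors (concat ` lists C)"
    by (auto simp: concat_subshift_def)
  have "map \<gamma> [0..<Suc n] = [\<gamma> 0] @ map (\<lambda>i. \<gamma> (Suc i)) [0..<n] @ []" for n
    by (simp add: map_upt_Suc del: upt_Suc)
  then have "map (\<lambda>i. \<gamma> (Suc i)) [0..<n] \<in> factors (concat ` lists C)" for n
    using prefixes factors_infix by (metis (no_types))
  then show ?thesis using y by (simp add: concat_subshift_def)
qed

lemma uncountable_UNIV_nat_set: "uncountable (UNIV :: nat set set)"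
proof
  assume "countable (UNIV :: nat set set)"
  then have "range (from_nat_into (UNIV :: nat set set)) = Pow UNIV" by simp
  then show False using Cantors_theorem by blast
qed

lemma uncountable_concat_subshift:
  assumes "a \<in> concat ` lists C" "b \<in> concat ` lists C" "length a = length b" "a \<noteq> b"
  shows "uncountable (concat_subshift C :: ('v, 'e) xpt set)"
proof
  assume countable: "countable (concat_subshift C :: ('v, 'e) xpt set)"
  let ?K = "length a"
  have "\<exists>r<?K. a ! r \<noteq> b ! r" using assms(3,4) nth_equalityI by blast
  then obtain r where r: "r < ?K" "a ! r \<noteq> b ! r" by blast
  define blk where "blk S j = (if j \<in> S then a else b)" for S :: "nat set" and j
  define word :: "nat set \<Rightarrow> ('v, 'e) xpt" where
    "word S = Inf (\<lambda>i. blk S (i div ?K) ! (i mod ?K))" for S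
  have "[] @ [] \<in> concat ` lists C" using concat_mem_concat_lists[of "[]" C] by simp
  then have "Inf (concat_inf [] (\<lambda>i. blk S (i div ?K) ! (i mod ?K))) \<in> concat_subshift C" for S
    using assms(1-3) r(1) by (intro concat_inf_block_word_mem_concat_subshift) (auto simp: blk_def)
  then have "word S \<in> concat_subshift C" for S by (simp add: word_def concat_inf_def)
  moreover have "inj word"
  proof
    fix S T assume "word S = word T"
    have same_block: "blk S j ! r = blk T j ! r" for j
    proof -
      have "(\<lambda>i. blk S (i div ?K) ! (i mod ?K)) = (\<lambda>i. blk T (i div ?K) ! (i mod ?K))"
        using \<open>word S = word T\<close> by (simp add: word_def)
      moreover have "(j * ?K + r) div ?K = j" using r(1) by (intro div_nat_eqI) auto
      ultimately show ?thesis using fun_cong[of _ _ "j * ?K + r"] r(1) by fastforce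
    qed
    have "j \<in> S \<longleftrightarrow> j \<in> T" for j
      using same_block[of j] r(2) by (auto simp: blk_def split: if_splits)
    then show "S = T" by blast
  qed
  ultimately have "countable (range word)" using countable by (blast intro: countable_subset)
  then show False using \<open>inj word\<close> countable_image_inj_on uncountable_UNIV_nat_set by blast
qed

lemma factor_of_loops_fpath:
  assumes "\<forall>c\<in>C. loop_at G v c" "x \<in> factors (concat ` lists C)" "x \<noteq> []"
  shows "fpath G x"
proof -
  obtain p s cs where cs: "p @ x @ s = concat cs" "cs \<in> lists C"
    using assms(2) by (auto simp: factors_def)
  then have "cs \<noteq> []" using assms(3) by auto
  then have "loop_at G v (p @ x @ s)" using assms(1) cs by (auto intro: loop_at_concat)
  then have "fpath G (p @ x @ s)" by (simp add: loop_at_def)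
  then show ?thesis using assms(3) by (rule fpath_infix)
qed

lemma concat_subshift_ipath:
  assumes "\<forall>c\<in>C. loop_at G v c" "Inf \<gamma> \<in> concat_subshift C"
  shows "ipath G \<gamma>"
  unfolding ipath_iff_fpath_prefixes
proof (intro allI impI)
  fix n :: nat assume "0 < n"
  have "map \<gamma> [0..<n] \<in> factors (concat ` lists C)"
    using assms(2) by (simp add: concat_subshift_def)
  then show "fpath G (map \<gamma> [0..<n])"
    using factor_of_loops_fpath[OF assms(1)] \<open>0 < n\<close> by simp
qed

lemma concat_subshift_edges:
  assumes "Inf \<gamma> \<in> concat_subshift C"
  shows "range \<gamma> \<subseteq> \<Union> (set ` C)"
proof
  fix e assume "e \<in> range \<gamma>"
  then obtain i where "e = \<gamma> i" by blast
  have "map \<gamma> [0..<Suc i] \<in> factors (concat ` lists C)"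
    using assms by (simp add: concat_subshift_def del: upt_Suc)
  then obtain p s cs where cs: "p @ map \<gamma> [0..<Suc i] @ s = concat cs" "cs \<in> lists C"
    unfolding factors_def by blast
  have "\<gamma> i \<in> set (concat cs)" unfolding cs(1)[symmetric] by simp
  then show "e \<in> \<Union> (set ` C)" using cs(2) \<open>e = \<gamma> i\<close> by auto
qed

lemma concat_subshift_subset_shift_space:
  fixes G :: "('v, 'e) ultragraph"
  assumes "\<forall>c\<in>C. loop_at G v c"
  shows "concat_subshift C \<subseteq> shift_space G"
proof
  fix y assume "y \<in> (concat_subshift C :: ('v, 'e) xpt set)"
  moreover from this obtain \<gamma> where "y = Inf \<gamma>" by (auto simp: concat_subshift_def)
  ultimately have "ipath G \<gamma>" using concat_subshift_ipath[OF assms] by simp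
  then show "y \<in> shift_space G" using \<open>y = Inf \<gamma>\<close> by (simp add: shift_space_def)
qed

lemma concat_subshift_closed:
  fixes G :: "('v, 'e) ultragraph"
  assumes "is_ultragraph G" "\<forall>c\<in>C. loop_at G v c" "finite C"
  shows "xclosed G (concat_subshift C)"
  unfolding xclosed_def
proof (intro conjI ballI impI)
  let ?Y = "concat_subshift C :: ('v, 'e) xpt set"
  show "?Y \<subseteq> shift_space G" using assms(2) by (rule concat_subshift_subset_shift_space)
  have countable: "countable (ultrapaths G)" using assms(1) by (rule countable_ultrapaths)
  fix x assume x: "x \<in> shift_space G" and adherent: "\<forall>\<epsilon>>0. \<exists>y\<in>?Y. xdist G x y < \<epsilon>"
  show "x \<in> ?Y"
  proof (cases x)
    case (Inf \<gamma>)
    then have "ipath G \<gamma>" using x by (auto simp: shift_space_def)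
    have "?Y \<subseteq> range Inf" by (auto simp: concat_subshift_def)
    have "map \<gamma> [0..<n] \<in> factors (concat ` lists C)" for n
    proof -
      obtain \<delta> where \<delta>: "Inf \<delta> \<in> ?Y" and same_prefix: "map \<delta> [0..<n] = map \<gamma> [0..<n]"
        using adherent_ipath_prefix[OF countable adherent[unfolded Inf] \<open>ipath G \<gamma>\<close>
            \<open>?Y \<subseteq> range Inf\<close>] by blast
      from \<delta> have "map \<delta> [0..<n] \<in> factors (concat ` lists C)" by (simp add: concat_subshift_def)
      then show ?thesis using same_prefix by simp
    qed
    then show ?thesis using Inf by (simp add: concat_subshift_def)
  next
    case (Fin \<alpha> A)
    have "\<exists>\<delta>. y = Inf \<delta> \<and> ipath G \<delta> \<and> range \<delta> \<subseteq> \<Union> (set ` C)" if y_in: "y \<in> ?Y" for y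
    proof -
      obtain \<delta> where y: "y = Inf \<delta>" using y_in by (auto simp: concat_subshift_def)
      with y_in have "Inf \<delta> \<in> ?Y" by simp
      then have "ipath G \<delta>" "range \<delta> \<subseteq> \<Union> (set ` C)"
        by (rule concat_subshift_ipath[OF assms(2)], rule concat_subshift_edges)
      then show ?thesis using y by blast
    qed
    moreover have "finite (\<Union> (set ` C))" using assms(3) by simp
    moreover have "(\<alpha>, A) \<in> ultrapaths G" using x Fin shift_space_Fin_ultrapath by blast
    ultimately have "\<not> (\<forall>\<epsilon>>0. \<exists>y\<in>?Y. xdist G (Fin \<alpha> A) y < \<epsilon>)"
      by (intro Fin_not_adherent[OF countable]) blast+
    then show ?thesis using adherent Fin by blast
  qed
qed

lemma blocks_concat_subshift:
  fixes G :: "('v, 'e) ultragraph"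
  assumes "\<forall>c\<in>C. loop_at G v c"
  shows "blocks G (concat_subshift C) = factors (concat ` lists C) - {[]}"
proof -
  let ?Y = "concat_subshift C :: ('v, 'e) xpt set"
  have "blocks G ?Y \<subseteq> factors (concat ` lists C) - {[]}"
  proof
    fix x assume "x \<in> blocks G ?Y"
    then have "fpath G x" and "\<exists>\<gamma>. Inf (concat_inf x \<gamma>) \<in> ?Y"
      by (auto simp: blocks_def blocks_n_def)
    then obtain \<gamma> where "Inf (concat_inf x \<gamma>) \<in> ?Y" by blast
    then have "map (concat_inf x \<gamma>) [0..<length x] \<in> factors (concat ` lists C)"
      by (simp add: concat_subshift_def)
    moreover have "map (concat_inf x \<gamma>) [0..<length x] = x" by (simp add: map_upt_concat_inf)
    ultimately show "x \<in> factors (concat ` lists C) - {[]}" using \<open>fpath G x\<close> by (auto simp: fpath_def)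
  qed
  moreover have "factors (concat ` lists C) - {[]} \<subseteq> blocks G ?Y"
  proof
    fix x assume x: "x \<in> factors (concat ` lists C) - {[]}"
    then obtain p s cs where ps: "p @ x @ s = concat cs" "cs \<in> lists C" by (auto simp: factors_def)
    then obtain c where "c \<in> C" using x by (cases cs) auto
    then have "c \<noteq> []" using assms loop_at_nonempty by (metis (no_types))
    let ?cycle = "\<lambda>i. c ! (i mod length c)"
    have c_word: "\<forall>j. (\<lambda>_. c) j \<in> concat ` lists C"
      using mem_concat_lists[OF \<open>c \<in> C\<close>] by simp
    have "Inf (concat_inf s ?cycle) \<in> ?Y"
      using concat_inf_block_word_mem_concat_subshift[of "p @ x" s C "\<lambda>_. c" "length c"]
        ps c_word \<open>c \<noteq> []\<close> by simp
    then have "ipath G (concat_inf s ?cycle)" using assms by (intro concat_subshift_ipath)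
    moreover have "Inf (concat_inf (x @ s) ?cycle) \<in> ?Y"
      using concat_inf_block_word_mem_concat_subshift[of p "x @ s" C "\<lambda>_. c" "length c"]
        ps c_word \<open>c \<noteq> []\<close> by simp
    moreover have "concat_inf (x @ s) ?cycle = concat_inf x (concat_inf s ?cycle)"
      by (auto simp: concat_inf_def nth_append fun_eq_iff)
    moreover have "fpath G x" using factor_of_loops_fpath[OF assms] x by blast
    ultimately have "x \<in> blocks_n G ?Y (length x)"
      unfolding blocks_n_def by auto
    then show "x \<in> blocks G ?Y" using x by (auto simp: blocks_def Suc_le_eq)
  qed
  ultimately show ?thesis by blast
qed

lemma irreducible_concat_subshift:
  assumes "\<forall>c\<in>C. loop_at G v c"
  shows "irreducible_sub G (concat_subshift C)"
  unfolding irreducible_sub_def blocks_concat_subshift[OF assms]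
proof (intro ballI)
  fix u w assume u: "u \<in> factors (concat ` lists C) - {[]}" and w: "w \<in> factors (concat ` lists C) - {[]}"
  obtain p s where "p @ u @ s \<in> concat ` lists C" using u by (auto simp: factors_def)
  then obtain cs where "p @ u @ s = concat cs" "cs \<in> lists C" by blast
  obtain p' s' where "p' @ w @ s' \<in> concat ` lists C" using w by (auto simp: factors_def)
  obtain c where "c \<in> C" using u \<open>p @ u @ s = concat cs\<close> \<open>cs \<in> lists C\<close> by (cases cs) auto
  let ?z = "s @ c @ p'"
  have "(p @ u @ s) @ c @ (p' @ w @ s') \<in> concat ` lists C"
    using concat_mem_concat_lists[of "[p @ u @ s, c, p' @ w @ s']" C] mem_concat_lists[OF \<open>c \<in> C\<close>]
      \<open>p @ u @ s = concat cs\<close> \<open>cs \<in> lists C\<close> \<open>p' @ w @ s' \<in> concat ` lists C\<close> by auto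
  then have "(p @ u) @ ?z @ (w @ s') \<in> concat ` lists C" and "p @ (u @ ?z @ w) @ s' \<in> concat ` lists C"
    by simp_all
  moreover have "?z \<noteq> []" using \<open>c \<in> C\<close> assms loop_at_nonempty by (metis (no_types) append_is_Nil_conv)
  ultimately show "\<exists>z\<in>factors (concat ` lists C) - {[]}. u @ z @ w \<in> factors (concat ` lists C) - {[]}"
    unfolding factors_def using u by blast
qed

theorem proposition3p9:
  fixes G :: "('v, 'e) ultragraph"
  assumes "is_ultragraph G" and "no_sinks G"
  shows "(\<exists>Y. Y \<subseteq> shift_space G \<and> xclosed G Y \<and> shift ` Y \<subseteq> Y
              \<and> uncountable Y \<and> irreducible_sub G Y)
         \<longleftrightarrow> (\<exists>v\<in>V G. \<exists>c1\<in>closed_paths G v. \<exists>c2\<in>closed_paths G v. c1 \<noteq> c2)"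
proof
  assume "\<exists>Y. Y \<subseteq> shift_space G \<and> xclosed G Y \<and> shift ` Y \<subseteq> Y \<and> uncountable Y \<and> irreducible_sub G Y"
  then obtain Y where Y: "Y \<subseteq> shift_space G" "irreducible_sub G Y" and "uncountable Y" by blast
  show "\<exists>v\<in>V G. \<exists>c1\<in>closed_paths G v. \<exists>c2\<in>closed_paths G v. c1 \<noteq> c2"
  proof (rule ccontr)
    assume "\<not> ?thesis"
    then have "countable Y" by (intro countable_irreducible_if_unique_closed_paths[OF assms(1) Y]) blast
    with \<open>uncountable Y\<close> show False by blast
  qed
next
  assume "\<exists>v\<in>V G. \<exists>c1\<in>closed_paths G v. \<exists>c2\<in>closed_paths G v. c1 \<noteq> c2"
  then obtain v c1 c2 where c: "c1 \<in> closed_paths G v" "c2 \<in> closed_paths G v" "c1 \<noteq> c2"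
    by blast
  let ?Y = "concat_subshift {c1, c2} :: ('v, 'e) xpt set"
  have loops: "\<forall>c\<in>{c1, c2}. loop_at G v c"
    using closed_path_loop_at[OF c(1)] closed_path_loop_at[OF c(2)] by blast
  have "c1 @ c2 \<noteq> c2 @ c1" using closed_paths_commute_imp_eq[OF c(1,2)] c(3) by blast
  moreover have "c1 @ c2 \<in> concat ` lists {c1, c2}" "c2 @ c1 \<in> concat ` lists {c1, c2}"
    using concat_mem_concat_lists[of "[c1, c2]"] concat_mem_concat_lists[of "[c2, c1]"]
      mem_concat_lists[of _ "{c1, c2}"] by auto
  ultimately have "uncountable ?Y" by (intro uncountable_concat_subshift) auto
  moreover have "shift ` ?Y \<subseteq> ?Y" using concat_subshift_shift by blast
  ultimately show "\<exists>Y. Y \<subseteq> shift_space G \<and> xclosed G Y \<and> shift ` Y \<subseteq> Y \<and> uncountable Y \<and> irreducible_sub G Y"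
    using concat_subshift_subset_shift_space[OF loops] concat_subshift_closed[OF assms(1) loops]
      irreducible_concat_subshift[OF loops] by blast
qed

end
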